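(* Let $N$ be a natural number. For any two sets $A,B\subseteq{}^N2$, we have $A\subseteq B$ if and only if $\Delta(B)\preceq\Delta(A)$.
   Context: $N=\{0,\ldots,N-1\}$; ${}^N2$ is the set of all functions $N\to\{0,1\}$, and ${}^{\underline N}2$ is the set of all partial functions $\sigma$ with $\mathrm{dom}(\sigma)\subseteq N$ and values in $\{0,1\}$ (functions are sets of ordered pairs; the empty function is included). For $\sigma\in{}^{\underline N}2$, $[\sigma]=\{f\in{}^N2:\sigma\subseteq f\}$. For $A\subseteq{}^N2$, $\Delta(A)=\{\sigma\in{}^{\underline N}2: [\sigma]\cap A=\emptyset \text{ and } [\rho]\cap A\neq\emptyset \text{ for all } \rho\subsetneq\sigma\}$. For $\delta_1,\delta_2\subseteq{}^{\underline N}2$, $\delta_1\preceq\delta_2$ means that for every $\sigma\in\delta_1$ there is $\rho\in\delta_2$ with $\rho\subseteq\sigma$. *)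

theory Defs
  imports Main
begin

text \<open>Functions are modelled as maps (partial functions) nat to bool; bool plays the role of 2.
  Inclusion of functions as sets of ordered pairs is map_le.\<close>

definition total_fns :: "nat \<Rightarrow> (nat \<rightharpoonup> bool) set" where
  "total_fns N = {f. dom f = {..<N}}"

definition partial_fns :: "nat \<Rightarrow> (nat \<rightharpoonup> bool) set" where
  "partial_fns N = {s. dom s \<subseteq> {..<N}}"

definition cyl :: "nat \<Rightarrow> (nat \<rightharpoonup> bool) \<Rightarrow> (nat \<rightharpoonup> bool) set" where
  "cyl N s = {f \<in> total_fns N. s \<subseteq>\<^sub>m f}"

definition Delta :: "nat \<Rightarrow> (nat \<rightharpoonup> bool) set \<Rightarrow> (nat \<rightharpoonup> bool) set" where
  "Delta N A = {s \<in> partial_fns N. cyl N s \<inter> A = {} \<and>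
      (\<forall>r. r \<subseteq>\<^sub>m s \<and> r \<noteq> s \<longrightarrow> cyl N r \<inter> A \<noteq> {})}"

definition preceq :: "(nat \<rightharpoonup> bool) set \<Rightarrow> (nat \<rightharpoonup> bool) set \<Rightarrow> bool" where
  "preceq d1 d2 \<longleftrightarrow> (\<forall>s\<in>d1. \<exists>r\<in>d2. r \<subseteq>\<^sub>m s)"

end

theory Submission
  imports Defs
begin

text \<open>The key fact is that \<open>\<Delta>(X)\<close> consists of the \<open>\<subseteq>\<close>-minimal partial functions whose
  cylinder misses \<open>X\<close>, and since domains are finite every partial function whose cylinder misses
  \<open>X\<close> extends such a minimal one. Hence \<open>A \<subseteq> B\<close> gives \<open>\<Delta>(B) \<preceq> \<Delta>(A)\<close> directly. Conversely,
  a total \<open>f \<in> A - B\<close> has cylinder \<open>{f}\<close>, so \<open>f\<close> extends some \<open>\<sigma> \<in> \<Delta>(B)\<close>, which by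
  \<open>\<Delta>(B) \<preceq> \<Delta>(A)\<close> extends some \<open>\<rho> \<in> \<Delta>(A)\<close>; but then \<open>f \<in> [\<rho>] \<inter> A = {}\<close>.\<close>

lemma map_le_eq_if_dom_le:
  assumes "r \<subseteq>\<^sub>m s" and "dom s \<subseteq> dom r"
  shows "r = s"
proof (rule map_le_antisym)
  show "s \<subseteq>\<^sub>m r"
    using assms unfolding map_le_def by (metis domIff subsetD)
qed (fact assms(1))

lemma dom_psubset_if_map_le_neq:
  assumes "r \<subseteq>\<^sub>m s" and "r \<noteq> s"
  shows "dom r \<subset> dom s"
  using assms map_le_eq_if_dom_le map_le_implies_dom_le by blast

lemma finite_dom_if_partial_fns: "s \<in> partial_fns N \<Longrightarrow> finite (dom s)"
  unfolding partial_fns_def by (blast intro: finite_subset)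

lemma total_fns_subset_partial_fns: "total_fns N \<subseteq> partial_fns N"
  unfolding total_fns_def partial_fns_def by auto

lemma cyl_total_fn:
  assumes "f \<in> total_fns N"
  shows "cyl N f = {f}"
  using assms map_le_eq_if_dom_le[of f] unfolding cyl_def total_fns_def by fastforce

lemma notin_if_in_cyl_Delta: "r \<in> Delta N X \<Longrightarrow> f \<in> cyl N r \<Longrightarrow> f \<notin> X"
  unfolding Delta_def by blast

lemma ex_Delta_map_le:
  assumes "s \<in> partial_fns N" and "cyl N s \<inter> X = {}"
  shows "\<exists>r\<in>Delta N X. r \<subseteq>\<^sub>m s"
  using assms
proof (induction "card (dom s)" arbitrary: s rule: less_induct)
  case less
  show ?case
  proof (cases "s \<in> Delta N X")
    case True
    then show ?thesis using map_le_refl by blast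
  next
    case False
    then obtain r where r: "r \<subseteq>\<^sub>m s" "r \<noteq> s" "cyl N r \<inter> X = {}"
      using less.prems unfolding Delta_def by blast
    have dom_r: "dom r \<subset> dom s"
      using r(1,2) by (rule dom_psubset_if_map_le_neq)
    then have "card (dom r) < card (dom s)"
      using finite_dom_if_partial_fns[OF less.prems(1)] by (simp add: psubset_card_mono)
    moreover have "r \<in> partial_fns N"
      using dom_r less.prems(1) unfolding partial_fns_def by auto
    ultimately obtain r' where "r' \<in> Delta N X" "r' \<subseteq>\<^sub>m r"
      using less.hyps r(3) by blast
    then show ?thesis
      using r(1) map_le_trans by blast
  qed
qed

lemma preceq_Delta_if_subset:
  assumes "A \<subseteq> B"
  shows "preceq (Delta N B) (Delta N A)"
  unfolding preceq_def
proof
  fix s assume "s \<in> Delta N B"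
  then have "s \<in> partial_fns N" and "cyl N s \<inter> A = {}"
    using assms unfolding Delta_def by auto
  then show "\<exists>r\<in>Delta N A. r \<subseteq>\<^sub>m s"
    by (rule ex_Delta_map_le)
qed

lemma subset_if_preceq_Delta:
  assumes A: "A \<subseteq> total_fns N" and preceq: "preceq (Delta N B) (Delta N A)"
  shows "A \<subseteq> B"
proof
  fix f assume "f \<in> A"
  then have f: "f \<in> total_fns N"
    using A by blast
  show "f \<in> B"
  proof (rule ccontr)
    assume "f \<notin> B"
    then have "cyl N f \<inter> B = {}"
      using cyl_total_fn[OF f] by auto
    then obtain s where s: "s \<in> Delta N B" "s \<subseteq>\<^sub>m f"
      using ex_Delta_map_le f total_fns_subset_partial_fns by blast
    then obtain r where r: "r \<in> Delta N A" "r \<subseteq>\<^sub>m s"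
      using preceq unfolding preceq_def by blast
    have "f \<in> cyl N r"
      using f r(2) s(2) map_le_trans unfolding cyl_def by blast
    then show False
      using notin_if_in_cyl_Delta[OF r(1)] \<open>f \<in> A\<close> by blast
  qed
qed

theorem theorem6p9:
  fixes N :: nat and A B :: "(nat \<rightharpoonup> bool) set"
  assumes "A \<subseteq> total_fns N" and "B \<subseteq> total_fns N"
  shows "A \<subseteq> B \<longleftrightarrow> preceq (Delta N B) (Delta N A)"
  using preceq_Delta_if_subset subset_if_preceq_Delta[OF assms(1)] by blast

end
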